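(* For every integer $n\ge 1$, $$\sum_{i=1}^{2^{n}}e(i)=\frac{1}{36}\Bigl((6n-7)2^{n+2}+18n+27+(-1)^{n}\Bigr).$$
   Context: The Stern polynomials $B_n(t)\in\mathbb{Z}[t]$, $n\ge 0$, are defined by $B_0(t)=0$, $B_1(t)=1$, $B_{2n}(t)=tB_n(t)$ and $B_{2n+1}(t)=B_n(t)+B_{n+1}(t)$ for $n\ge 1$. For $n\ge 1$, $e(n)=\deg_t B_n(t)$. *)

theory Defs
  imports "HOL-Computational_Algebra.Polynomial"
begin

function stern_poly :: "nat \<Rightarrow> int poly" where
  "stern_poly n =
     (if n = 0 then 0
      else if n = 1 then 1
      else if even n then monom 1 1 * stern_poly (n div 2)
      else stern_poly (n div 2) + stern_poly (n div 2 + 1))"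
  by pat_completeness auto
termination
  by (relation "measure id") (auto elim!: oddE)

declare stern_poly.simps [simp del]

definition e :: "nat \<Rightarrow> nat" where
  "e n = degree (stern_poly n)"

end

theory Submission
  imports Defs
begin

(*
  All coefficients of B_n are nonnegative, so no cancellation occurs in
  B_{2n+1} = B_n + B_{n+1}; this yields the degree recurrences
  e(2n) = e(n) + 1 and e(2n+1) = max (e n) (e (n+1)) for n >= 1.
  From these, consecutive values of e differ by at most one, which gives
  e(4n+1) = e(n) + 1 and e(4n+3) = e(n+1) + 1.

  Writing S(m) = e(1) + ... + e(m) and splitting the ranges by residues
  mod 2 and mod 4 gives S(4m) + e(m) + 1 = S(2m) + 2 S(m) + 4m.  At m = 2^k
  (where e(2^k) = k) this is a linear three-term recurrence for S(2^n),
  which the closed form of the theorem satisfies as well; agreement at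
  n = 1, 2 and strong induction finish the proof.
*)

lemma stern_poly_coeff_nonneg: "coeff (stern_poly n) i \<ge> 0"
proof (induction n arbitrary: i rule: stern_poly.induct)
  case (1 n)
  then show ?case
    by (subst stern_poly.simps) (cases i; auto simp: coeff_monom_mult)
qed

lemma degree_add_nonneg_coeffs:
  fixes p q :: "'a :: linordered_idom poly"
  assumes p: "\<And>i. coeff p i \<ge> 0" and q: "\<And>i. coeff q i \<ge> 0"
  shows "degree (p + q) = max (degree p) (degree q)"
proof (rule antisym)
  have no_cancel: "coeff (p + q) i \<noteq> 0" if "coeff p i \<noteq> 0 \<or> coeff q i \<noteq> 0" for i
    using that p[of i] q[of i] by auto
  have "degree p \<le> degree (p + q)" if "p \<noteq> 0"
    using that no_cancel by (intro le_degree) auto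
  moreover have "degree q \<le> degree (p + q)" if "q \<noteq> 0"
    using that no_cancel by (intro le_degree) auto
  ultimately show "max (degree p) (degree q) \<le> degree (p + q)"
    by (cases "p = 0"; cases "q = 0") auto
qed (rule degree_add_le_max)

lemma add_nonneg_coeffs_eq_0:
  fixes p q :: "'a :: linordered_idom poly"
  assumes "\<And>i. coeff p i \<ge> 0" and "\<And>i. coeff q i \<ge> 0" and "p + q = 0"
  shows "p = 0"
proof (rule poly_eqI)
  fix i
  show "coeff p i = coeff 0 i"
    using assms(1,2)[of i] arg_cong[OF assms(3), of "\<lambda>r. coeff r i"] by simp
qed

lemma stern_poly_nonzero: "n \<ge> 1 \<Longrightarrow> stern_poly n \<noteq> 0"
proof (induction n rule: stern_poly.induct)
  case (1 n)
  show ?case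
  proof (cases "n = 1")
    case False
    with "1" have "stern_poly (n div 2) \<noteq> 0" by (cases "even n") auto
    then show ?thesis
      using False "1.prems" add_nonneg_coeffs_eq_0[OF stern_poly_coeff_nonneg stern_poly_coeff_nonneg]
      by (subst stern_poly.simps) (auto simp: monom_eq_0_iff)
  qed (simp add: stern_poly.simps)
qed

lemma stern_poly_double: "n \<ge> 1 \<Longrightarrow> stern_poly (2 * n) = monom 1 1 * stern_poly n"
  by (subst stern_poly.simps) simp

lemma stern_poly_odd: "n \<ge> 1 \<Longrightarrow> stern_poly (2 * n + 1) = stern_poly n + stern_poly (n + 1)"
  by (subst stern_poly.simps) simp

lemma e_1 [simp]: "e 1 = 0" "e (Suc 0) = 0"
  by (simp_all add: e_def stern_poly.simps)

lemma e_double: "n \<ge> 1 \<Longrightarrow> e (2 * n) = e n + 1"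
  using stern_poly_nonzero[of n]
  by (simp add: e_def stern_poly_double degree_mult_eq degree_monom_eq monom_eq_0_iff)

lemma e_odd: "n \<ge> 1 \<Longrightarrow> e (2 * n + 1) = max (e n) (e (n + 1))"
  unfolding e_def by (subst stern_poly_odd) (simp_all add: degree_add_nonneg_coeffs stern_poly_coeff_nonneg)

(* B_(2^k) = t^k. *)
lemma e_power_of_2: "e (2 ^ k) = k"
  by (induction k) (simp_all add: e_double)

lemma e_step: "n \<ge> 1 \<Longrightarrow> e (n + 1) \<le> e n + 1 \<and> e n \<le> e (n + 1) + 1"
proof (induction n rule: less_induct)
  case (less n)
  consider "n = 1" | k where "n = 2 * k" "k \<ge> 1" | k where "n = 2 * k + 1" "k \<ge> 1"
    using less.prems by (metis One_nat_def Suc_leI add_0 dvd_mult_div_cancel mult_0_right neq0_conv oddE)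
  then show ?case
  proof cases
    case 1
    then show ?thesis using e_double[of 1] by (simp add: numeral_2_eq_2)
  next
    case (2 k)
    then have "e (k + 1) \<le> e k + 1" using less.IH[of k] by simp
    then show ?thesis using 2 e_double e_odd by auto
  next
    case (3 k)
    then have "e k \<le> e (k + 1) + 1" using less.IH[of k] by simp
    moreover have "e (2 * (k + 1)) = e (k + 1) + 1" by (rule e_double) simp
    ultimately show ?thesis using 3 e_odd by auto
  qed
qed

lemma e_4n_plus_1: "n \<ge> 1 \<Longrightarrow> e (4 * n + 1) = e n + 1"
  using e_odd[of "2 * n"] e_double[of n] e_odd[of n] e_step[of n] by simp

lemma e_4n_plus_3: "e (4 * n + 3) = e (n + 1) + 1"
proof (cases "n = 0")
  case True
  then show ?thesis using e_odd[of 1] e_double[of 1] by (simp add: numeral_2_eq_2 numeral_3_eq_3)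
next
  case False
  have eq: "2 * (2 * n + 1) + 1 = 4 * n + 3" "2 * n + 1 + 1 = 2 * (n + 1)" by simp_all
  have "e (4 * n + 3) = max (e (2 * n + 1)) (e (2 * (n + 1)))"
    using e_odd[of "2 * n + 1"] unfolding eq by simp
  then show ?thesis using False e_double[of "n + 1"] e_odd[of n] e_step[of n] by simp
qed

lemma sum_lessThan_in_pairs:
  fixes f :: "nat \<Rightarrow> 'a :: comm_monoid_add"
  shows "(\<Sum>i<2 * m. f i) = (\<Sum>i<m. f (2 * i) + f (2 * i + 1))"
  by (induction m) (simp_all add: ac_simps)

(* e_sum m = e(1) + ... + e(m), the partial sums S(m). *)
definition e_sum :: "nat \<Rightarrow> nat" where
  "e_sum m = (\<Sum>i<m. e (i + 1))"

definition e_odd_sum :: "nat \<Rightarrow> nat" where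
  "e_odd_sum m = (\<Sum>i<m. e (2 * i + 1))"

lemma e_sum_double: "e_sum (2 * m) = e_odd_sum m + e_sum m + m"
proof -
  have "e_sum (2 * m) = (\<Sum>i<m. e (2 * i + 1) + e (2 * (i + 1)))"
    unfolding e_sum_def sum_lessThan_in_pairs by (simp add: algebra_simps)
  also have "\<dots> = (\<Sum>i<m. e (2 * i + 1) + e (i + 1) + 1)"
    by (intro sum.cong refl) (subst e_double; simp)
  finally show ?thesis
    unfolding sum.distrib by (simp add: e_sum_def e_odd_sum_def)
qed

(* The terms e(4i+1) are e(i) + 1, except e(1) = 0 at i = 0. *)
lemma sum_e_4n_plus_1: "m \<ge> 1 \<Longrightarrow> (\<Sum>i<m. e (4 * i + 1)) + e m + 1 = e_sum m + m"
proof (induction m rule: nat_induct_at_least)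
  case (Suc m)
  then show ?case using e_4n_plus_1[of m] by (simp add: e_sum_def)
qed (simp add: e_sum_def)

lemma e_odd_sum_double: "m \<ge> 1 \<Longrightarrow> e_odd_sum (2 * m) + e m + 1 = 2 * e_sum m + 2 * m"
proof -
  assume m: "m \<ge> 1"
  have "2 * (2 * i) + 1 = 4 * i + 1" "2 * (2 * i + 1) + 1 = 4 * i + 3" for i :: nat
    by simp_all
  then have "e_odd_sum (2 * m) = (\<Sum>i<m. e (4 * i + 1) + e (4 * i + 3))"
    unfolding e_odd_sum_def sum_lessThan_in_pairs by (simp only:)
  also have "\<dots> = (\<Sum>i<m. e (4 * i + 1) + e (i + 1) + 1)"
    by (simp only: e_4n_plus_3 add.assoc)
  also have "\<dots> = (\<Sum>i<m. e (4 * i + 1)) + e_sum m + m"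
    unfolding sum.distrib by (simp add: e_sum_def)
  finally show ?thesis using sum_e_4n_plus_1[OF m] by simp
qed

lemma e_sum_quadruple: "m \<ge> 1 \<Longrightarrow> e_sum (4 * m) + e m + 1 = e_sum (2 * m) + 2 * e_sum m + 4 * m"
  using e_sum_double[of "2 * m"] e_sum_double[of m] e_odd_sum_double[of m] by simp

definition closed_form :: "nat \<Rightarrow> real" where
  "closed_form n = ((6 * real n - 7) * 2 ^ (n + 2) + 18 * real n + 27 + (-1) ^ n) / 36"

lemma closed_form_rec:
  "closed_form (n + 3) + real n + 2 = closed_form (n + 2) + 2 * closed_form (n + 1) + 2 ^ (n + 3)"
  by (simp add: closed_form_def power_add field_simps)

lemma e_sum_power_of_2_rec:
  "real (e_sum (2 ^ (k + 3))) + real k + 2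
     = real (e_sum (2 ^ (k + 2))) + 2 * real (e_sum (2 ^ (k + 1))) + 2 ^ (k + 3)"
proof -
  have "(4::nat) * 2 ^ (k + 1) = 2 ^ (k + 3)" "(2::nat) * 2 ^ (k + 1) = 2 ^ (k + 2)"
    by (simp_all add: power_add)
  then have "e_sum (2 ^ (k + 3)) + k + 2 = e_sum (2 ^ (k + 2)) + 2 * e_sum (2 ^ (k + 1)) + 2 ^ (k + 3)"
    using e_sum_quadruple[of "2 ^ (k + 1)"] by (simp only: e_power_of_2) simp
  then show ?thesis
    using arg_cong[of _ _ real] by fastforce
qed

(* S(2^n) agrees with the closed form: both satisfy the same recurrence. *)
lemma e_sum_power_of_2: "n \<ge> 1 \<Longrightarrow> real (e_sum (2 ^ n)) = closed_form n"
proof (induction n rule: less_induct)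
  case (less n)
  consider "n = 1" | "n = 2" | k where "n = k + 3"
    using less.prems by (cases "n \<ge> 3") (metis le_add_diff_inverse2, linarith)
  then show ?case
  proof cases
    case 1
    have "e_sum 2 = 1"
      using e_double[of 1] by (simp add: e_sum_def numeral_eq_Suc)
    then show ?thesis using 1 by (simp add: closed_form_def)
  next
    case 2
    have "e_sum 4 = 4"
      using e_double[of 1] e_odd[of 1] e_double[of 2] by (simp add: e_sum_def numeral_eq_Suc)
    then show ?thesis using 2 by (simp add: closed_form_def)
  next
    case (3 k)
    then show ?thesis
      using less.IH[of "k + 1"] less.IH[of "k + 2"] e_sum_power_of_2_rec[of k] closed_form_rec[of k]
      by simp
  qed
qed

theorem corollary4p7:
  fixes n :: nat
  assumes "n \<ge> 1"
  shows "(\<Sum>i=1..2^n. real (e i)) =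
    ((6 * real n - 7) * 2 ^ (n + 2) + 18 * real n + 27 + (-1) ^ n) / 36"
proof -
  have "(\<Sum>i=1..2^n. real (e i)) = real (e_sum (2 ^ n))"
    by (simp add: e_sum_def sum.atLeast1_atMost_eq)
  also have "\<dots> = closed_form n"
    using assms by (rule e_sum_power_of_2)
  finally show ?thesis by (simp add: closed_form_def)
qed
end
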